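(* Let $\mathcal{Y}$ be a set, fix $\alpha\in(0,1)$ and $b\in(0,\infty]$ (possibly $+\infty$). Let $L_t:2^{\mathcal{Y}}\times\mathcal{Y}\to[0,1]$, $t\in\mathbb{N}$, be loss functions with $L_t(\mathcal{Y},y)=0$ and $L_t(\emptyset,y)=1$ for all $y\in\mathcal{Y}$. Let $y_t\in\mathcal{Y}$ be arbitrary and let $\mathcal{C}_t\subseteq\mathcal{Y}$ be prediction sets determined by $q_t$ such that $\mathcal{C}_t=\emptyset$ whenever $q_t\le -b$ and $\mathcal{C}_t=\mathcal{Y}$ whenever $q_t\ge b$. Let $h:\mathbb{N}\to[0,\infty)$ be admissible (nonnegative, nondecreasing, sublinear: $h(t)/t\to0$), and let $r_t:\mathbb{R}\to[-\infty,\infty]$ satisfy, for some constant $c>0$ and all $t,x$, $$x \geq c\, h(t) \implies r_t(x) \geq b, \qquad x \leq -c\, h(t) \implies r_t(x) \leq -b.$$ With $q_1$ arbitrary, consider the iteration $$q_{t+1} = r_t\Big(\sum_{i=1}^t\big(L_i(\mathcal{C}_i,y_i)-\alpha\big)\Big).$$ Then for all $T\ge1$, $$\Bigg|\frac1T\sum_{t=1}^T\big(L_t(\mathcal{C}_t,y_t)-\alpha\big)\Bigg| \le \frac{c\,h(T)+1}{T}.$$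
   Context: Deterministic online conformal risk control setting: no probabilistic assumptions on the sequence $y_t$. *)

theory Defs
  imports "HOL-Analysis.Analysis"
begin

definition admissible :: "(nat \<Rightarrow> real) \<Rightarrow> bool" where
  "admissible h \<longleftrightarrow> (\<forall>t. h t \<ge> 0) \<and> mono h \<and> ((\<lambda>t. h t / real t) \<longlonglongrightarrow> 0)"

end

theory Submission
  imports Defs
begin

text \<open>Write \<open>S\<^sub>t\<close> for the cumulative miscoverage \<open>\<Sum>\<^sub>i\<^sub>\<le>\<^sub>t (L\<^sub>i(C\<^sub>i, y\<^sub>i) - \<alpha>)\<close>. Each step
  changes \<open>S\<close> by at most 1. Whenever \<open>S\<^sub>t \<ge> c h(t)\<close>, the update forces \<open>q\<^sub>t\<^sub>+\<^sub>1 \<ge> b\<close>, so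
  \<open>C\<^sub>t\<^sub>+\<^sub>1\<close> is the whole space, its loss is 0 and \<open>S\<close> decreases; symmetrically \<open>S\<close> increases
  whenever \<open>S\<^sub>t \<le> -c h(t)\<close>. A sequence with unit steps that is pushed back towards 0 outside
  the nondecreasing band \<open>\<plusminus>c h(t)\<close> never leaves the band \<open>\<plusminus>(c h(t) + 1)\<close>.\<close>

lemma abs_le_band_if_pushed_back:
  fixes S g :: "nat \<Rightarrow> real"
  assumes g_nonneg: "\<And>n. 0 \<le> g n" and g_mono: "mono g"
    and unit_step: "\<And>n. n \<ge> n\<^sub>0 \<Longrightarrow> \<bar>S (Suc n) - S n\<bar> \<le> 1"
    and push_down: "\<And>n. n \<ge> n\<^sub>0 \<Longrightarrow> S n \<ge> g n \<Longrightarrow> S (Suc n) \<le> S n"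
    and push_up: "\<And>n. n \<ge> n\<^sub>0 \<Longrightarrow> S n \<le> - g n \<Longrightarrow> S (Suc n) \<ge> S n"
    and start: "\<bar>S n\<^sub>0\<bar> \<le> g n\<^sub>0 + 1"
    and "n\<^sub>0 \<le> n"
  shows "\<bar>S n\<bar> \<le> g n + 1"
  using \<open>n\<^sub>0 \<le> n\<close>
proof (induction n rule: dec_induct)
  case base
  show ?case by (fact start)
next
  case (step n)
  have mono_step: "g n \<le> g (Suc n)" using g_mono by (simp add: monoD)
  have small_step: "\<bar>S (Suc n) - S n\<bar> \<le> 1" using step.hyps(1) by (rule unit_step)
  consider "S n \<ge> g n" | "S n \<le> - g n" | "\<bar>S n\<bar> < g n" by linarith
  then show ?case
  proof cases
    case 1
    have "S (Suc n) \<le> S n" using push_down[OF step.hyps(1) 1] .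
    with 1 step.IH mono_step small_step g_nonneg[of n] show ?thesis
      unfolding abs_le_iff abs_less_iff by linarith
  next
    case 2
    have "S (Suc n) \<ge> S n" using push_up[OF step.hyps(1) 2] .
    with 2 step.IH mono_step small_step g_nonneg[of n] show ?thesis
      unfolding abs_le_iff abs_less_iff by linarith
  next
    case 3
    with mono_step small_step show ?thesis
      unfolding abs_le_iff abs_less_iff by linarith
  qed
qed

theorem proposition3:
  fixes \<alpha> :: real and b :: ereal and c :: real
    and L :: "nat \<Rightarrow> 'y set \<Rightarrow> 'y \<Rightarrow> real"
    and y :: "nat \<Rightarrow> 'y"
    and Cset :: "nat \<Rightarrow> ereal \<Rightarrow> 'y set"
    and h :: "nat \<Rightarrow> real"
    and r :: "nat \<Rightarrow> real \<Rightarrow> ereal"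
    and q :: "nat \<Rightarrow> ereal"
    and T :: nat
  assumes alpha: "0 < \<alpha>" "\<alpha> < 1"
    and b_pos: "0 < b"
    and L_range: "\<And>t S z. t \<ge> 1 \<Longrightarrow> 0 \<le> L t S z \<and> L t S z \<le> 1"
    and L_UNIV: "\<And>t z. t \<ge> 1 \<Longrightarrow> L t UNIV z = 0"
    and L_empty: "\<And>t z. t \<ge> 1 \<Longrightarrow> L t {} z = 1"
    and C_low: "\<And>t x. t \<ge> 1 \<Longrightarrow> x \<le> - b \<Longrightarrow> Cset t x = {}"
    and C_high: "\<And>t x. t \<ge> 1 \<Longrightarrow> x \<ge> b \<Longrightarrow> Cset t x = UNIV"
    and h_adm: "admissible h"
    and c_pos: "c > 0"
    and r_high: "\<And>t x. t \<ge> 1 \<Longrightarrow> x \<ge> c * h t \<Longrightarrow> r t x \<ge> b"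
    and r_low: "\<And>t x. t \<ge> 1 \<Longrightarrow> x \<le> - c * h t \<Longrightarrow> r t x \<le> - b"
    and q_rec: "\<And>t. t \<ge> 1 \<Longrightarrow>
        q (Suc t) = r t (\<Sum>i=1..t. L i (Cset i (q i)) (y i) - \<alpha>)"
    and T_pos: "T \<ge> 1"
  shows "\<bar>(1 / real T) * (\<Sum>t=1..T. L t (Cset t (q t)) (y t) - \<alpha>)\<bar> \<le> (c * h T + 1) / real T"
proof -
  define loss where "loss t = L t (Cset t (q t)) (y t)" for t
  define S where "S n = (\<Sum>t=1..n. loss t - \<alpha>)" for n
  have S_Suc: "S (Suc n) - S n = loss (Suc n) - \<alpha>" for n
    by (simp add: S_def)
  have loss_range: "0 \<le> loss t" "loss t \<le> 1" if "t \<ge> 1" for t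
    using L_range[OF that] by (auto simp: loss_def)
  have q_Suc: "q (Suc t) = r t (S t)" if "t \<ge> 1" for t
    using q_rec[OF that] by (simp add: S_def loss_def)
  have g_nonneg: "0 \<le> c * h n" for n
    using h_adm c_pos by (simp add: admissible_def)
  have g_mono: "mono (\<lambda>n. c * h n)"
    using h_adm c_pos by (auto simp: admissible_def mono_def)
  have unit_step: "\<bar>S (Suc n) - S n\<bar> \<le> 1" if "n \<ge> 1" for n
    using loss_range[of "Suc n"] alpha by (simp add: S_Suc abs_le_iff)
  have push_down: "S (Suc n) \<le> S n" if "n \<ge> 1" "S n \<ge> c * h n" for n
    using r_high[OF that] q_Suc[OF that(1)] S_Suc[of n] alpha by (simp add: loss_def C_high L_UNIV)
  have push_up: "S (Suc n) \<ge> S n" if "n \<ge> 1" "S n \<le> - (c * h n)" for n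
    using r_low[of n "S n"] that q_Suc[OF that(1)] S_Suc[of n] alpha
    by (simp add: loss_def C_low L_empty)
  have start: "\<bar>S 1\<bar> \<le> c * h 1 + 1"
    using loss_range[of 1] alpha g_nonneg[of 1] by (simp add: S_def abs_le_iff)
  have "\<bar>S T\<bar> \<le> c * h T + 1"
    using abs_le_band_if_pushed_back[OF g_nonneg g_mono unit_step push_down push_up start T_pos] .
  then show ?thesis
    using T_pos by (simp add: S_def loss_def abs_mult divide_right_mono)
qed

end
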